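(* Let $(X,\le,\to,\rightsquigarrow,0,1)$ be a bounded sup-commutative pseudo BCK-algebra and let $(\exists,\forall)$ be a pair of strong synchronized maps on $X$ such that $\exists$ is a weak existential quantifier (equivalently, $\forall$ is a weak universal quantifier). Then $\forall(x\wedge y)=\forall x\wedge\forall y$ and $\exists(x\vee y)=\exists x\vee\exists y$ for all $x,y\in X$.
   Context: A quantum B-algebra is a partially ordered set $(X,\le)$ with two binary operations $\to$ and $\rightsquigarrow$ such that for all $x,y,z\in X$: $y\to z\le (x\to y)\to(x\to z)$; $y\rightsquigarrow z\le (x\rightsquigarrow y)\to(x\rightsquigarrow z)$; $y\le z$ implies $x\to y\le x\to z$; and $x\le y\to z$ iff $y\le x\rightsquigarrow z$. A bounded pseudo BCK-algebra $(X,\le,\to,\rightsquigarrow,0,1)$ is a quantum B-algebra with a greatest element $1$ satisfying $1\to x=1\rightsquigarrow x=x$ and a least element $0$; then $x\le y$ iff $x\to y=1$ iff $x\rightsquigarrow y=1$. It is sup-commutative if $(x\to y)\rightsquigarrow y=(y\to x)\rightsquigarrow x$ and $(x\rightsquigarrow y)\to y=(y\rightsquigarrow x)\to x$ for all $x,y$. Write $x^{-}=x\to 0$, $x^{\sim}=x\rightsquigarrow 0$; a bounded sup-commutative pseudo BCK-algebra satisfies $(x^{-})^{\sim}=(x^{\sim})^{-}=x$, and $(X,\le)$ is a lattice with $x\vee y=(x\to y)\rightsquigarrow y=(x\rightsquigarrow y)\to y$ and $x\wedge y=(x^{-}\vee y^{-})^{\sim}=(x^{\sim}\vee y^{\sim})^{-}$.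 Define $x\odot y=(x\to y^{-})^{\sim}$ and $x\oplus y=y^{\sim}\to x$ $(=x^{-}\rightsquigarrow y)$. A map $\tau:X\to X$ is good if $(\tau(x^{-}))^{\sim}=(\tau(x^{\sim}))^{-}$ for all $x$; good maps $\tau,\sigma$ are synchronized if $\sigma(x)=(\tau(x^{-}))^{\sim}=(\tau(x^{\sim}))^{-}$ for all $x$; strong synchronized if moreover $\tau\circ\sigma=\sigma$ (equivalently $\sigma\circ\tau=\tau$). A good map $\exists$ is a weak existential quantifier if for all $x,y$: $\exists 0=0$; $\exists 1=1$; $x\le\exists x$; $\exists(x\oplus\exists y)=\exists(\exists x\oplus y)=\exists x\oplus\exists y$; $\exists(x\oplus x)=\exists x\oplus\exists x$; $\exists(x\odot\exists y)=\exists(\exists x\odot y)=\exists x\odot\exists y$. A good map $\forall$ is a weak universal quantifier if for all $x,y$: $\forall 1=1$; $\forall 0=0$; $\forall x\le x$; $\forall(x\odot\forall y)=\forall(\forall x\odot y)=\forall x\odot\forall y$; $\forall(x\odot x)=\forall x\odot\forall x$; $\forall(x\oplus\forall y)=\forall(\forall x\oplus y)=\forall x\oplus\forall y$. *)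

theory Defs
  imports Main
begin

text \<open>A quantum B-algebra on the whole type 'a, with partial order le,
  arrows imp (\<rightarrow>) and imp2 (the squiggly arrow).\<close>
definition quantum_B_algebra ::
  "('a \<Rightarrow> 'a \<Rightarrow> bool) \<Rightarrow> ('a \<Rightarrow> 'a \<Rightarrow> 'a) \<Rightarrow> ('a \<Rightarrow> 'a \<Rightarrow> 'a) \<Rightarrow> bool" where
  "quantum_B_algebra le imp imp2 \<longleftrightarrow>
     (\<forall>x. le x x) \<and>
     (\<forall>x y. le x y \<and> le y x \<longrightarrow> x = y) \<and>
     (\<forall>x y z. le x y \<and> le y z \<longrightarrow> le x z) \<and>
     (\<forall>x y z. le (imp y z) (imp (imp x y) (imp x z))) \<and>
     (\<forall>x y z. le (imp2 y z) (imp (imp2 x y) (imp2 x z))) \<and>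
     (\<forall>x y z. le y z \<longrightarrow> le (imp x y) (imp x z)) \<and>
     (\<forall>x y z. le x (imp y z) \<longleftrightarrow> le y (imp2 x z))"

definition bounded_pseudo_BCK ::
  "('a \<Rightarrow> 'a \<Rightarrow> bool) \<Rightarrow> ('a \<Rightarrow> 'a \<Rightarrow> 'a) \<Rightarrow> ('a \<Rightarrow> 'a \<Rightarrow> 'a) \<Rightarrow> 'a \<Rightarrow> 'a \<Rightarrow> bool" where
  "bounded_pseudo_BCK le imp imp2 zero one \<longleftrightarrow>
     quantum_B_algebra le imp imp2 \<and>
     (\<forall>x. le x one) \<and> (\<forall>x. imp one x = x \<and> imp2 one x = x) \<and>
     (\<forall>x. le zero x)"

definition sup_commutative ::
  "('a \<Rightarrow> 'a \<Rightarrow> 'a) \<Rightarrow> ('a \<Rightarrow> 'a \<Rightarrow> 'a) \<Rightarrow> bool" where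
  "sup_commutative imp imp2 \<longleftrightarrow>
     (\<forall>x y. imp2 (imp x y) y = imp2 (imp y x) x \<and>
            imp (imp2 x y) y = imp (imp2 y x) x)"

definition neg1 :: "('a \<Rightarrow> 'a \<Rightarrow> 'a) \<Rightarrow> 'a \<Rightarrow> 'a \<Rightarrow> 'a" where
  "neg1 imp zero x = imp x zero"

definition neg2 :: "('a \<Rightarrow> 'a \<Rightarrow> 'a) \<Rightarrow> 'a \<Rightarrow> 'a \<Rightarrow> 'a" where
  "neg2 imp2 zero x = imp2 x zero"

definition bsup :: "('a \<Rightarrow> 'a \<Rightarrow> 'a) \<Rightarrow> ('a \<Rightarrow> 'a \<Rightarrow> 'a) \<Rightarrow> 'a \<Rightarrow> 'a \<Rightarrow> 'a" where
  "bsup imp imp2 x y = imp2 (imp x y) y"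

definition binf :: "('a \<Rightarrow> 'a \<Rightarrow> 'a) \<Rightarrow> ('a \<Rightarrow> 'a \<Rightarrow> 'a) \<Rightarrow> 'a \<Rightarrow> 'a \<Rightarrow> 'a \<Rightarrow> 'a" where
  "binf imp imp2 zero x y =
     neg2 imp2 zero (bsup imp imp2 (neg1 imp zero x) (neg1 imp zero y))"

definition bodot :: "('a \<Rightarrow> 'a \<Rightarrow> 'a) \<Rightarrow> ('a \<Rightarrow> 'a \<Rightarrow> 'a) \<Rightarrow> 'a \<Rightarrow> 'a \<Rightarrow> 'a \<Rightarrow> 'a" where
  "bodot imp imp2 zero x y = neg2 imp2 zero (imp x (neg1 imp zero y))"

definition boplus :: "('a \<Rightarrow> 'a \<Rightarrow> 'a) \<Rightarrow> ('a \<Rightarrow> 'a \<Rightarrow> 'a) \<Rightarrow> 'a \<Rightarrow> 'a \<Rightarrow> 'a \<Rightarrow> 'a" where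
  "boplus imp imp2 zero x y = imp (neg2 imp2 zero y) x"

definition good_map :: "('a \<Rightarrow> 'a \<Rightarrow> 'a) \<Rightarrow> ('a \<Rightarrow> 'a \<Rightarrow> 'a) \<Rightarrow> 'a \<Rightarrow> ('a \<Rightarrow> 'a) \<Rightarrow> bool" where
  "good_map imp imp2 zero t \<longleftrightarrow>
     (\<forall>x. neg2 imp2 zero (t (neg1 imp zero x)) = neg1 imp zero (t (neg2 imp2 zero x)))"

definition synchronized ::
  "('a \<Rightarrow> 'a \<Rightarrow> 'a) \<Rightarrow> ('a \<Rightarrow> 'a \<Rightarrow> 'a) \<Rightarrow> 'a \<Rightarrow> ('a \<Rightarrow> 'a) \<Rightarrow> ('a \<Rightarrow> 'a) \<Rightarrow> bool" where
  "synchronized imp imp2 zero \<tau> \<sigma> \<longleftrightarrow>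
     good_map imp imp2 zero \<tau> \<and> good_map imp imp2 zero \<sigma> \<and>
     (\<forall>x. \<sigma> x = neg2 imp2 zero (\<tau> (neg1 imp zero x)) \<and>
          \<sigma> x = neg1 imp zero (\<tau> (neg2 imp2 zero x)))"

definition strong_synchronized ::
  "('a \<Rightarrow> 'a \<Rightarrow> 'a) \<Rightarrow> ('a \<Rightarrow> 'a \<Rightarrow> 'a) \<Rightarrow> 'a \<Rightarrow> ('a \<Rightarrow> 'a) \<Rightarrow> ('a \<Rightarrow> 'a) \<Rightarrow> bool" where
  "strong_synchronized imp imp2 zero \<tau> \<sigma> \<longleftrightarrow>
     synchronized imp imp2 zero \<tau> \<sigma> \<and> \<tau> \<circ> \<sigma> = \<sigma>"

definition weak_existential ::
  "('a \<Rightarrow> 'a \<Rightarrow> bool) \<Rightarrow> ('a \<Rightarrow> 'a \<Rightarrow> 'a) \<Rightarrow> ('a \<Rightarrow> 'a \<Rightarrow> 'a) \<Rightarrow> 'a \<Rightarrow> 'a \<Rightarrow> ('a \<Rightarrow> 'a) \<Rightarrow> bool" where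
  "weak_existential le imp imp2 zero one E \<longleftrightarrow>
     good_map imp imp2 zero E \<and> E zero = zero \<and> E one = one \<and>
     (\<forall>x. le x (E x)) \<and>
     (\<forall>x y. E (boplus imp imp2 zero x (E y)) = boplus imp imp2 zero (E x) (E y) \<and>
            E (boplus imp imp2 zero (E x) y) = boplus imp imp2 zero (E x) (E y)) \<and>
     (\<forall>x. E (boplus imp imp2 zero x x) = boplus imp imp2 zero (E x) (E x)) \<and>
     (\<forall>x y. E (bodot imp imp2 zero x (E y)) = bodot imp imp2 zero (E x) (E y) \<and>
            E (bodot imp imp2 zero (E x) y) = bodot imp imp2 zero (E x) (E y))"

end

theory Submission
  imports Defs
begin

text \<open>In the sup-commutative bounded case the algebra is a bounded commutative BCK-algebra in which
  \<open>x \<or> y = (x \<rightarrow> y) \<rightarrow> y\<close> is the join.  The key property of \<open>\<exists>\<close> is monotonicity, which comes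
  from the \<open>\<odot>\<close>-axiom: \<open>x \<le> \<exists>y\<close> means \<open>x \<odot> (\<exists>y)\<^sup>- = 0\<close>, hence \<open>\<exists>x \<odot> (\<exists>y)\<^sup>- = 0\<close>.  Since the
  \<open>\<exists>\<close>-fixed elements are closed under \<open>\<rightarrow>\<close>, \<open>\<exists>x \<or> \<exists>y\<close> is fixed, and monotonicity makes \<open>\<exists>\<close>
  preserve joins.  The statement for \<open>\<forall>\<close> is its De Morgan dual, \<open>\<forall>x = (\<exists>x\<^sup>-)\<^sup>-\<close>.\<close>

text \<open>With \<open>x = 1\<close>, the second quantum-B-algebra axiom as formalised gives \<open>y \<rightsquigarrow> z \<le> y \<rightarrow> z\<close>;
  residuation then gives the converse, so the two arrows coincide.\<close>
lemma bounded_pseudo_BCK_imp2_eq_imp: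
  assumes "bounded_pseudo_BCK le imp imp2 zero one"
  shows "imp2 = imp"
proof -
  from assms have Q: "quantum_B_algebra le imp imp2"
    and one_imp: "\<And>x. imp one x = x \<and> imp2 one x = x"
    by (auto simp: bounded_pseudo_BCK_def)
  from Q have antisym: "\<And>x y. le x y \<Longrightarrow> le y x \<Longrightarrow> x = y"
    and trans: "\<And>x y z. le x y \<Longrightarrow> le y z \<Longrightarrow> le x z"
    and refl: "\<And>x. le x x"
    and axiom2: "\<And>x y z. le (imp2 y z) (imp (imp2 x y) (imp2 x z))"
    and residuation: "\<And>x y z. le x (imp y z) \<longleftrightarrow> le y (imp2 x z)"
    unfolding quantum_B_algebra_def by blast+
  have imp2_le_imp: "le (imp2 y z) (imp y z)" for y z
    using axiom2[of y z one] one_imp by simp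
  have imp_le_imp2: "le (imp x z) (imp2 x z)" for x z
  proof -
    have "le x (imp2 (imp x z) z)" using residuation refl by blast
    hence "le x (imp (imp x z) z)" using trans imp2_le_imp by blast
    thus ?thesis using residuation by blast
  qed
  show ?thesis using antisym imp2_le_imp imp_le_imp2 by (intro ext) blast
qed

locale bounded_comm_BCK =
  fixes le :: "'a \<Rightarrow> 'a \<Rightarrow> bool" and imp :: "'a \<Rightarrow> 'a \<Rightarrow> 'a" and zero one :: 'a
  assumes antisym: "\<And>x y. le x y \<Longrightarrow> le y x \<Longrightarrow> x = y"
    and trans: "\<And>x y z. le x y \<Longrightarrow> le y z \<Longrightarrow> le x z"
    and refl: "\<And>x. le x x"
    and residuation: "\<And>x y z. le x (imp y z) \<longleftrightarrow> le y (imp x z)"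
    and le_one: "\<And>x. le x one"
    and one_imp: "\<And>x. imp one x = x"
    and zero_le: "\<And>x. le zero x"
    and imp_comm: "\<And>x y. imp (imp x y) y = imp (imp y x) x"
begin

abbreviation neg :: "'a \<Rightarrow> 'a" where
  "neg x \<equiv> imp x zero"

lemma le_iff_imp_eq_one: "le x y \<longleftrightarrow> imp x y = one"
proof
  assume "le x y"
  hence "le x (imp one y)" by (simp add: one_imp)
  hence "le one (imp x y)" using residuation by blast
  thus "imp x y = one" using antisym le_one by blast
next
  assume "imp x y = one"
  hence "le one (imp x y)" by (simp add: refl)
  hence "le x (imp one y)" using residuation by blast
  thus "le x y" by (simp add: one_imp)
qed

lemma imp_refl: "imp x x = one"
  using le_iff_imp_eq_one refl by blast

lemma zero_imp: "imp zero x = one"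
  using le_iff_imp_eq_one zero_le by blast

lemma neg_neg: "neg (neg x) = x"
  using imp_comm[of x zero] by (simp add: zero_imp one_imp)

lemma imp_antitone: "le u v \<Longrightarrow> le (imp v c) (imp u c)"
proof -
  assume "le u v"
  moreover have "le v (imp (imp v c) c)" using residuation refl by blast
  ultimately have "le u (imp (imp v c) c)" by (rule trans)
  thus ?thesis using residuation by blast
qed

lemma join_upper1: "le x (imp (imp x y) y)"
  using residuation refl by blast

lemma join_upper2: "le y (imp (imp x y) y)"
proof -
  have "le (imp x y) (imp y y)" by (simp add: imp_refl le_one)
  thus ?thesis using residuation by blast
qed

lemma join_least: "le x z \<Longrightarrow> le y z \<Longrightarrow> le (imp (imp x y) y) z"
proof -
  assume "le x z" "le y z"
  hence "le (imp (imp x y) y) (imp (imp z y) y)" by (intro imp_antitone)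
  also have "imp (imp z y) y = z"
    using imp_comm[of z y] \<open>le y z\<close> le_iff_imp_eq_one one_imp by simp
  finally show ?thesis .
qed

end

locale bounded_comm_BCK_quantifiers = bounded_comm_BCK +
  fixes E A :: "'a \<Rightarrow> 'a"
  assumes A_eq: "\<And>x. A x = neg (E (neg x))"
    and E_A: "\<And>x. E (A x) = A x"
    and E_zero: "E zero = zero"
    and le_E: "\<And>x. le x (E x)"
    and E_oplus: "\<And>x y. E (imp (neg (E y)) x) = imp (neg (E y)) (E x)"
    and E_odot: "\<And>x y. E (neg (imp x (neg (E y)))) = neg (imp (E x) (neg (E y)))"
begin

lemma E_idem: "E (E y) = E y"
  using E_oplus[where x = zero and y = y] by (simp add: E_zero neg_neg)

lemma E_neg_E: "E (neg (E z)) = neg (E z)"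
  using E_A[of "neg z"] by (simp add: A_eq neg_neg)

lemma E_imp_fixed:
  assumes "E a = a" "E b = b"
  shows "E (imp a b) = imp a b"
proof -
  have "imp a b = imp (neg (E (neg a))) (E b)"
    using assms E_neg_E[of a] by (simp add: neg_neg)
  moreover have "E (imp (neg (E (neg a))) b) = imp (neg (E (neg a))) (E b)"
    by (rule E_oplus)
  ultimately show ?thesis
    using assms by (metis E_neg_E neg_neg)
qed

lemma E_mono_fixed:
  assumes "le x (E y)" shows "le (E x) (E y)"
proof -
  have "imp x (E y) = one" using assms le_iff_imp_eq_one by blast
  hence "neg (imp x (neg (E (neg (E y))))) = zero"
    by (simp add: E_neg_E neg_neg one_imp)
  hence "E (neg (imp x (neg (E (neg (E y)))))) = zero" by (simp add: E_zero)
  hence "neg (imp (E x) (neg (E (neg (E y))))) = zero" by (simp add: E_odot)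
  hence "imp (E x) (E y) = one" by (metis E_neg_E neg_neg one_imp zero_imp)
  thus ?thesis using le_iff_imp_eq_one by blast
qed

lemma E_join: "E (imp (imp x y) y) = imp (imp (E x) (E y)) (E y)"
proof (rule antisym)
  let ?j = "imp (imp (E x) (E y)) (E y)"
  have fixed: "E ?j = ?j" by (simp add: E_imp_fixed E_idem)
  have "le (imp (imp x y) y) ?j"
    using join_least trans le_E join_upper1 join_upper2 by metis
  hence "le (imp (imp x y) y) (E ?j)" using fixed by simp
  hence "le (E (imp (imp x y) y)) (E ?j)" by (rule E_mono_fixed)
  thus "le (E (imp (imp x y) y)) ?j" using fixed by simp
  have "le (E x) (E (imp (imp x y) y))" by (rule E_mono_fixed, rule trans[OF join_upper1 le_E])
  moreover have "le (E y) (E (imp (imp x y) y))" by (rule E_mono_fixed, rule trans[OF join_upper2 le_E])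
  ultimately show "le ?j (E (imp (imp x y) y))" by (rule join_least)
qed

lemma A_meet:
  "A (neg (imp (imp (neg x) (neg y)) (neg y))) = neg (imp (imp (neg (A x)) (neg (A y))) (neg (A y)))"
  by (simp add: A_eq neg_neg E_join)

end

theorem lemma6p4:
  fixes le :: "'a \<Rightarrow> 'a \<Rightarrow> bool"
    and imp imp2 :: "'a \<Rightarrow> 'a \<Rightarrow> 'a"
    and zero one :: 'a
    and E A :: "'a \<Rightarrow> 'a"
  assumes "bounded_pseudo_BCK le imp imp2 zero one"
    and "sup_commutative imp imp2"
    and "strong_synchronized imp imp2 zero E A"
    and "weak_existential le imp imp2 zero one E"
  shows "\<forall>x y. A (binf imp imp2 zero x y) = binf imp imp2 zero (A x) (A y) \<and>
               E (bsup imp imp2 x y) = bsup imp imp2 (E x) (E y)"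
proof -
  have arrows_eq: "imp2 = imp" using assms(1) by (rule bounded_pseudo_BCK_imp2_eq_imp)
  have "bounded_comm_BCK le imp zero one"
    using assms(1,2) unfolding arrows_eq bounded_comm_BCK_def bounded_pseudo_BCK_def
      quantum_B_algebra_def sup_commutative_def by (elim conjE) (intro conjI; blast)
  moreover have "bounded_comm_BCK_quantifiers_axioms le imp zero E A"
    using assms(3,4) unfolding arrows_eq bounded_comm_BCK_quantifiers_axioms_def
    by (auto simp: strong_synchronized_def synchronized_def weak_existential_def
        boplus_def bodot_def neg1_def neg2_def fun_eq_iff)
  ultimately interpret bounded_comm_BCK_quantifiers le imp zero one E A
    by (rule bounded_comm_BCK_quantifiers.intro)
  show ?thesis
    by (simp add: arrows_eq binf_def bsup_def neg1_def neg2_def E_join A_meet)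
qed

end
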